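(* Let $d\ge 3$. An $\mathcal L_d$-structure $\mathcal M$ with domain $\mathbb M$ is a model of $\mathrm{PQM}_d$ if and only if there exists a strong $\mathcal L_d$-morphism $\kappa:\mathbb M\to\mathbb H_d$ from $\mathcal M$ to $\mathcal H_d$ such that $\kappa(\mathbb M)\ne\{\bot\}$.
   Context: Notation. For $d\ge 1$, $\mathbb H_d$ is the set of complex linear subspaces of $\mathbb C^d$, ordered by inclusion $\le$, with $\top=\mathbb C^d$, $\bot=\{0\}$, $p^\bot$ the orthogonal complement, $p\wedge q=p\cap q$ and $p\vee q=p+q$. $\mathbb U_d$ is the set of unitary operators on $\mathbb C^d$, and for $U\in\mathbb U_d$, $p\in\mathbb H_d$, $U(p)=\{Uv: v\in p\}$. The Sasaki projection is $p\,\&\,q := q\cap(q^\bot+p)$. Subspaces $p,q$ are compatible iff $p=(p\wedge q)\vee(p\wedge q^\bot)$. Language $\mathcal L_d$: a first-order language without equality and without constants, having a unary function symbol $u_U$ for each $U\in\mathbb U_d$, a unary function symbol $\pi_q$ for each $q\in\mathbb H_d$, and a unary relation symbol $[\,\cdot:p]$ for each $p\in\mathbb H_d$. Theory $\mathrm{PQM}_d$ (over $\mathcal L_d$) has the following axioms, for all $p,q\in\mathbb H_d$ and $U\in\mathbb U_d$: ($\neg\bot$) $\exists x\,\neg[x:\bot]$; ($\top$) $\forall x\,[x:\top]$; ($\le$) if $p\le q$: $\forall x\,([x:p]\to[x:q])$; ($\wedge$) if $p,q$ are compatible: $\forall x\,([x:p]\wedge[x:q]\to[x:p\wedge q])$;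 ($\pi_i$) $\forall x\,([x:p]\to[\pi_q(x):p\,\&\,q])$; ($\pi_c$) if $p\le q$: $\forall x\,([\pi_p(\pi_q(x)):\bot]\to[\pi_p(x):\bot])$; ($\pi_\bot$) $\forall x\,([\pi_q(x):\bot]\to[x:q^\bot])$; ($u_i$) $\forall x\,([x:p]\to[u_U(x):U(p)])$; ($u_e$) $\forall x\,([u_U(x):p]\to[x:U^{-1}(p)])$. Hilbert model $\mathcal H_d$: the $\mathcal L_d$-structure with domain $\mathbb H_d$, $u_U^{\mathcal H_d}(x)=U(x)$, $\pi_q^{\mathcal H_d}(x)=x\,\&\,q$, and $[x:p]^{\mathcal H_d}$ holds iff $x\le p$. Strong $\mathcal L_d$-morphism: a map $\kappa:\mathbb M\to\mathbb H_d$ such that for all $m\in\mathbb M$: $[m:p]^{\mathcal M}\iff\kappa(m)\le p$ for every $p\in\mathbb H_d$; $\kappa(\pi_q^{\mathcal M}(m))=\kappa(m)\,\&\,q$ for every $q\in\mathbb H_d$; and $\kappa(u_U^{\mathcal M}(m))=U(\kappa(m))$ for every $U\in\mathbb U_d$. *)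

theory Defs
  imports "HOL-Analysis.Analysis"
begin

text \<open>Complex d-space is modelled as complex^'n with CARD('n) = d.\<close>

definition cinner :: "complex^'n \<Rightarrow> complex^'n \<Rightarrow> complex" where
  "cinner v w = (\<Sum>i\<in>UNIV. cnj (v$i) * w$i)"

definition csubspace :: "(complex^'n) set \<Rightarrow> bool" where
  "csubspace S \<longleftrightarrow> 0 \<in> S \<and> (\<forall>x\<in>S. \<forall>y\<in>S. x + y \<in> S) \<and> (\<forall>c. \<forall>x\<in>S. c *s x \<in> S)"

definition Hd :: "(complex^'n) set set" where
  "Hd = {S. csubspace S}"

definition orth :: "(complex^'n) set \<Rightarrow> (complex^'n) set" where
  "orth S = {v. \<forall>w\<in>S. cinner w v = 0}"

definition ssum :: "(complex^'n) set \<Rightarrow> (complex^'n) set \<Rightarrow> (complex^'n) set" where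
  "ssum A B = {a + b | a b. a \<in> A \<and> b \<in> B}"

definition bot_sp :: "(complex^'n) set" where
  "bot_sp = {0}"

definition top_sp :: "(complex^'n) set" where
  "top_sp = UNIV"

definition sasaki :: "(complex^'n) set \<Rightarrow> (complex^'n) set \<Rightarrow> (complex^'n) set" where
  "sasaki p q = q \<inter> ssum (orth q) p"

definition compatible :: "(complex^'n) set \<Rightarrow> (complex^'n) set \<Rightarrow> bool" where
  "compatible p q \<longleftrightarrow> p = ssum (p \<inter> q) (p \<inter> orth q)"

definition cadjoint :: "complex^'n^'n \<Rightarrow> complex^'n^'n" where
  "cadjoint U = (\<chi> i j. cnj (U$j$i))"

definition Ud :: "(complex^'n^'n) set" where
  "Ud = {U. U ** cadjoint U = mat 1 \<and> cadjoint U ** U = mat 1}"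

definition app_op :: "complex^'n^'n \<Rightarrow> (complex^'n) set \<Rightarrow> (complex^'n) set" where
  "app_op U p = (\<lambda>v. U *v v) ` p"

text \<open>An L_d-structure with domain UNIV :: 'm set: interpretations of u_U, pi_q and [_:p].\<close>
record ('m, 'n) lstruct =
  u_fun :: "complex^'n^'n \<Rightarrow> 'm \<Rightarrow> 'm"
  pi_fun :: "(complex^'n) set \<Rightarrow> 'm \<Rightarrow> 'm"
  rel :: "(complex^'n) set \<Rightarrow> 'm \<Rightarrow> bool"

definition PQM_model :: "('m, 'n::finite) lstruct \<Rightarrow> bool" where
  "PQM_model M \<longleftrightarrow>
     (\<exists>x. \<not> rel M bot_sp x) \<and>
     (\<forall>x. rel M top_sp x) \<and>
     (\<forall>p\<in>Hd. \<forall>q\<in>Hd. p \<subseteq> q \<longrightarrow> (\<forall>x. rel M p x \<longrightarrow> rel M q x)) \<and>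
     (\<forall>p\<in>Hd. \<forall>q\<in>Hd. compatible p q \<longrightarrow> (\<forall>x. rel M p x \<and> rel M q x \<longrightarrow> rel M (p \<inter> q) x)) \<and>
     (\<forall>p\<in>Hd. \<forall>q\<in>Hd. \<forall>x. rel M p x \<longrightarrow> rel M (sasaki p q) (pi_fun M q x)) \<and>
     (\<forall>p\<in>Hd. \<forall>q\<in>Hd. p \<subseteq> q \<longrightarrow>
        (\<forall>x. rel M bot_sp (pi_fun M p (pi_fun M q x)) \<longrightarrow> rel M bot_sp (pi_fun M p x))) \<and>
     (\<forall>q\<in>Hd. \<forall>x. rel M bot_sp (pi_fun M q x) \<longrightarrow> rel M (orth q) x) \<and>
     (\<forall>p\<in>Hd. \<forall>U\<in>Ud. \<forall>x. rel M p x \<longrightarrow> rel M (app_op U p) (u_fun M U x)) \<and>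
     (\<forall>p\<in>Hd. \<forall>U\<in>Ud. \<forall>x. rel M p (u_fun M U x) \<longrightarrow> rel M (app_op (matrix_inv U) p) x)"

definition strong_morphism :: "('m, 'n::finite) lstruct \<Rightarrow> ('m \<Rightarrow> (complex^'n) set) \<Rightarrow> bool" where
  "strong_morphism M \<kappa> \<longleftrightarrow>
     (\<forall>m. \<kappa> m \<in> Hd) \<and>
     (\<forall>m. \<forall>p\<in>Hd. rel M p m \<longleftrightarrow> \<kappa> m \<subseteq> p) \<and>
     (\<forall>m. \<forall>q\<in>Hd. \<kappa> (pi_fun M q m) = sasaki (\<kappa> m) q) \<and>
     (\<forall>m. \<forall>U\<in>Ud. \<kappa> (u_fun M U m) = app_op U (\<kappa> m))"

end

(*
  One direction is routine: the Hilbert model satisfies the axioms, and a strong morphism pulls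
  them back. Conversely, in a model every element m has a support, the least subspace p with
  [m:p]. It exists because for d >= 3 the relation [m:_] is closed under all meets, not only
  under compatible ones; the axioms for the projections then force the support to move by
  Sasaki projections, and those for unitaries make it move by the unitary.

  Closure under meets reduces, by compatible meets with hyperplanes, to showing that [x:u^perp]
  and [x:w^perp] imply [x:(u+w)^perp]. Projecting x onto the plane r spanned by u and w gives an
  element y lying on two distinct lines of r. Together with a unit vector orthogonal to r (this
  is where d >= 3 is used) they span a real three-dimensional frame, in which a Kochen-Specker
  type construction applies: compatible meets turn two rays with inner product g into rays with
  inner product (3g-1)/(1+g), and into rays with any inner product between g and 1. Iterating
  reaches orthogonal rays, so y is bottom, and x lies in r^perp, which is inside (u+w)^perp.
*)

theory Submission
  imports Defs
begin

subsection \<open>The complex inner product\<close>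

lemma cinner_add_left: "cinner (u + v) w = cinner u w + cinner v w"
  by (simp add: cinner_def algebra_simps sum.distrib)

lemma cinner_add_right: "cinner u (v + w) = cinner u v + cinner u w"
  by (simp add: cinner_def algebra_simps sum.distrib)

lemma cinner_diff_left: "cinner (u - v) w = cinner u w - cinner v w"
  by (simp add: cinner_def algebra_simps sum_subtractf)

lemma cinner_diff_right: "cinner u (v - w) = cinner u v - cinner u w"
  by (simp add: cinner_def algebra_simps sum_subtractf)

lemma cinner_smult_left: "cinner (c *s v) w = cnj c * cinner v w"
  by (simp add: cinner_def sum_distrib_left algebra_simps)

lemma cinner_smult_right: "cinner v (c *s w) = c * cinner v w"
  by (simp add: cinner_def sum_distrib_left algebra_simps)

lemma cinner_zero_left [simp]: "cinner 0 w = 0"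
  by (simp add: cinner_def)

lemma cinner_zero_right [simp]: "cinner w 0 = 0"
  by (simp add: cinner_def)

lemma cinner_commute: "cinner w v = cnj (cinner v w)"
  by (simp add: cinner_def mult.commute)

lemma cinner_eq_0_commute: "cinner w v = 0 \<longleftrightarrow> cinner v w = 0"
  by (metis cinner_commute complex_cnj_zero_iff)

lemma Re_cinner: "Re (cinner v w) = v \<bullet> w"
  by (simp add: cinner_def inner_vec_def inner_complex_def Re_sum)

lemma cinner_self: "cinner v v = of_real ((norm v)\<^sup>2)"
proof -
  have "Im (cinner v v) = 0"
    by (simp add: cinner_def Im_sum)
  then show ?thesis
    using Re_cinner[of v v] by (simp add: complex_eq_iff power2_norm_eq_inner)
qed

lemma cinner_self_eq_0 [simp]: "cinner v v = 0 \<longleftrightarrow> v = 0"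
  by (simp add: cinner_self)

lemma scaleR_eq_smult: "r *\<^sub>R (v::complex^'n) = of_real r *s v"
  by (simp add: vec_eq_iff flip: scaleR_conv_of_real)

lemma smult_eq_Re_Im: "(c::complex) *s v = Re c *\<^sub>R v + Im c *\<^sub>R (\<i> *s v)"
  by (simp add: scaleR_eq_smult vec_eq_iff algebra_simps complex_eq_iff)

subsection \<open>Complex subspaces\<close>

lemma csubspace_0: "csubspace S \<Longrightarrow> 0 \<in> S"
  and csubspace_add: "csubspace S \<Longrightarrow> x \<in> S \<Longrightarrow> y \<in> S \<Longrightarrow> x + y \<in> S"
  and csubspace_smult: "csubspace S \<Longrightarrow> x \<in> S \<Longrightarrow> c *s x \<in> S"
  by (simp_all add: csubspace_def)

lemma csubspace_imp_subspace: "csubspace S \<Longrightarrow> subspace S"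
  by (simp add: csubspace_def subspace_def scaleR_eq_smult)

lemma csubspace_diff: "csubspace S \<Longrightarrow> x \<in> S \<Longrightarrow> y \<in> S \<Longrightarrow> x - y \<in> S"
  by (simp add: csubspace_imp_subspace subspace_diff)

lemma csubspace_inter: "csubspace p \<Longrightarrow> csubspace q \<Longrightarrow> csubspace (p \<inter> q)"
  by (simp add: csubspace_def)

lemma csubspace_UNIV: "csubspace UNIV"
  and csubspace_zero: "csubspace {0}"
  by (simp_all add: csubspace_def)

lemma csubspace_Inter: "(\<And>p. p \<in> P \<Longrightarrow> csubspace p) \<Longrightarrow> csubspace (\<Inter>P)"
  by (simp add: csubspace_def)

lemma ssumI: "a \<in> A \<Longrightarrow> b \<in> B \<Longrightarrow> a + b \<in> ssum A B"
  unfolding ssum_def by blast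

lemma ssumE:
  assumes "x \<in> ssum A B"
  obtains a b where "a \<in> A" "b \<in> B" "x = a + b"
  using assms unfolding ssum_def by blast

lemma ssum_mono: "A \<subseteq> A' \<Longrightarrow> B \<subseteq> B' \<Longrightarrow> ssum A B \<subseteq> ssum A' B'"
  unfolding ssum_def by blast

lemma ssum_least: "csubspace S \<Longrightarrow> A \<subseteq> S \<Longrightarrow> B \<subseteq> S \<Longrightarrow> ssum A B \<subseteq> S"
  by (auto elim!: ssumE intro: csubspace_add)

lemma ssum_upper1: "0 \<in> B \<Longrightarrow> A \<subseteq> ssum A B"
  using ssumI[of _ A 0 B] by auto

lemma ssum_upper2: "0 \<in> A \<Longrightarrow> B \<subseteq> ssum A B"
  using ssumI[of 0 A _ B] by auto

lemma ssum_commute: "ssum A B = ssum B A"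
  unfolding ssum_def using add.commute by blast

lemma csubspace_ssum:
  assumes "csubspace p" "csubspace q"
  shows "csubspace (ssum p q)"
  unfolding csubspace_def
proof (intro conjI ballI allI)
  show "0 \<in> ssum p q"
    using ssumI[of 0 p 0 q] assms by (simp add: csubspace_0)
next
  fix x y assume "x \<in> ssum p q" "y \<in> ssum p q"
  then obtain a b a' b' where "a \<in> p" "b \<in> q" "a' \<in> p" "b' \<in> q" "x + y = (a + a') + (b + b')"
    by (auto elim!: ssumE simp: algebra_simps)
  then show "x + y \<in> ssum p q"
    using assms by (metis csubspace_add ssumI)
next
  fix c x assume "x \<in> ssum p q"
  then obtain a b where "a \<in> p" "b \<in> q" "c *s x = c *s a + c *s b"
    by (auto elim!: ssumE simp: vector_add_ldistrib)
  then show "c *s x \<in> ssum p q"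
    using assms by (metis csubspace_smult ssumI)
qed

subsection \<open>Orthogonal complements\<close>

lemma orthI: "(\<And>w. w \<in> S \<Longrightarrow> cinner w v = 0) \<Longrightarrow> v \<in> orth S"
  by (simp add: orth_def)

lemma orthD: "v \<in> orth S \<Longrightarrow> w \<in> S \<Longrightarrow> cinner w v = 0"
  by (simp add: orth_def)

lemma orthD': "v \<in> orth S \<Longrightarrow> w \<in> S \<Longrightarrow> cinner v w = 0"
  by (metis orthD cinner_eq_0_commute)

lemma csubspace_orth: "csubspace (orth S)"
  unfolding csubspace_def orth_def by (simp add: cinner_add_right cinner_smult_right)

lemma orth_antimono: "A \<subseteq> B \<Longrightarrow> orth B \<subseteq> orth A"
  by (auto simp: orth_def)

lemma subset_orth_commute: "A \<subseteq> orth B \<longleftrightarrow> B \<subseteq> orth A"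
  by (meson orthD' orthI subset_iff)

lemma in_orth_self: "x \<in> S \<Longrightarrow> x \<in> orth S \<Longrightarrow> x = 0"
  by (auto simp: orth_def)

lemma orth_zero: "orth {0} = UNIV"
  by (simp add: orth_def)

lemma orth_eq_orthogonal_comp:
  assumes "csubspace S"
  shows "orth S = orthogonal_comp S"
proof
  show "orth S \<subseteq> orthogonal_comp S"
    by (auto simp: orth_def orthogonal_comp_def orthogonal_def Re_cinner[symmetric])
  show "orthogonal_comp S \<subseteq> orth S"
  proof (intro subsetI orthI)
    fix v w assume v: "v \<in> orthogonal_comp S" and w: "w \<in> S"
    then have "\<i> *s w \<in> S"
      using assms by (simp add: csubspace_smult)
    then have "Re (cinner (\<i> *s w) v) = 0" "Re (cinner w v) = 0"
      using v w by (simp_all add: orthogonal_comp_def orthogonal_def Re_cinner)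
    then show "cinner w v = 0"
      by (simp add: cinner_smult_left complex_eq_iff)
  qed
qed

lemma orth_orth: "csubspace S \<Longrightarrow> orth (orth S) = S"
  using orth_eq_orthogonal_comp[of S] orth_eq_orthogonal_comp[OF csubspace_orth, of S]
    orthogonal_comp_self[OF csubspace_imp_subspace] by simp

lemma orth_decomp:
  assumes "csubspace S"
  obtains a b where "a \<in> S" "b \<in> orth S" "v = a + b"
proof -
  have "v \<in> S + orthogonal_comp S"
    using subspace_sum_orthogonal_comp[OF csubspace_imp_subspace[OF assms]] by auto
  then show ?thesis
    using that orth_eq_orthogonal_comp[OF assms] by (auto elim!: set_plus_elim)
qed

lemma orth_subset_zero_iff:
  assumes "csubspace S"
  shows "orth S \<subseteq> {0} \<longleftrightarrow> S = UNIV"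
proof
  assume "orth S \<subseteq> {0}"
  then have "orth S = {0}"
    using csubspace_0[OF csubspace_orth] by blast
  then show "S = UNIV"
    using orth_orth[OF assms] orth_zero by metis
qed (use in_orth_self in blast)

lemma orth_ssum: "csubspace p \<Longrightarrow> csubspace q \<Longrightarrow> orth (ssum p q) = orth p \<inter> orth q"
proof
  assume "csubspace p" "csubspace q"
  then show "orth (ssum p q) \<subseteq> orth p \<inter> orth q"
    by (simp add: orth_antimono ssum_upper1 ssum_upper2 csubspace_0)
qed (auto simp: orth_def cinner_add_left elim!: ssumE)

lemma orth_inter:
  assumes "csubspace p" "csubspace q"
  shows "orth (p \<inter> q) = ssum (orth p) (orth q)"
proof -
  have "csubspace (ssum (orth p) (orth q))"
    by (simp add: csubspace_ssum csubspace_orth)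
  moreover have "orth (ssum (orth p) (orth q)) = p \<inter> q"
    by (simp add: orth_ssum csubspace_orth orth_orth assms)
  ultimately show ?thesis
    by (metis orth_orth)
qed

subsection \<open>Complex lines\<close>

definition cline :: "complex^'n \<Rightarrow> (complex^'n) set" where
  "cline v = range (\<lambda>c. c *s v)"

lemma clineE:
  assumes "x \<in> cline v"
  obtains c where "x = c *s v"
  using assms by (auto simp: cline_def)

lemma smult_in_cline: "c *s v \<in> cline v"
  unfolding cline_def by (rule rangeI)

lemma in_cline_self: "v \<in> cline v"
  using smult_in_cline[of 1 v] by simp

lemma csubspace_cline: "csubspace (cline v)"
  unfolding csubspace_def cline_def
  by (auto simp: vector_sadd_rdistrib vector_smult_assoc
      intro: range_eqI[where x = 0] range_eqI[where x = "_ + _"] range_eqI[where x = "_ * _"])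

lemma cline_subset: "csubspace S \<Longrightarrow> v \<in> S \<Longrightarrow> cline v \<subseteq> S"
  by (auto elim!: clineE intro: csubspace_smult)

lemma cline_smult: "c \<noteq> 0 \<Longrightarrow> cline (c *s v) = cline v"
  by (metis cline_subset csubspace_cline smult_in_cline subset_antisym vector_smult_assoc
      field_class.field_inverse vector_smult_lid)

lemma orth_singleton: "orth {v} = orth (cline v)"
  by (auto simp: orth_def cline_def cinner_smult_left)

lemma orth_orth_singleton: "orth (orth {v}) = cline v"
  by (simp add: orth_singleton orth_orth csubspace_cline)

lemma cline_subset_orth: "cinner v w = 0 \<Longrightarrow> cline v \<subseteq> orth (cline w)"
  by (auto simp: orth_def cline_def cinner_smult_left cinner_smult_right cinner_eq_0_commute)

lemma ssum_cline_orth_singleton: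
  assumes "csubspace p" "v \<in> orth p" "v \<noteq> 0"
  shows "ssum p (cline v) \<inter> orth {v} = p"
proof
  show "ssum p (cline v) \<inter> orth {v} \<subseteq> p"
  proof
    fix z assume z: "z \<in> ssum p (cline v) \<inter> orth {v}"
    then obtain a c where a: "a \<in> p" and za: "z = a + c *s v"
      by (auto elim!: ssumE clineE)
    have "cinner v z = 0" "cinner v a = 0"
      using z orthD'[OF assms(2) a] by (auto simp: orth_def)
    then have "c = 0"
      using assms(3) by (simp add: za cinner_add_right cinner_smult_right)
    then show "z \<in> p"
      by (simp add: za a)
  qed
  show "p \<subseteq> ssum p (cline v) \<inter> orth {v}"
    using orthD'[OF assms(2)] ssum_upper1[OF csubspace_0[OF csubspace_cline]] by (auto intro: orthI)
qed

lemma dim_orth_ssum_cline_less: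
  assumes "csubspace p" "v \<in> orth p" "v \<noteq> 0"
  shows "dim (orth (ssum p (cline v))) < dim (orth p)"
proof (rule dim_psubset)
  have "orth (ssum p (cline v)) = orth p \<inter> orth (cline v)"
    by (simp add: orth_ssum assms(1) csubspace_cline)
  moreover have "v \<notin> orth (cline v)"
    using assms(3) in_orth_self in_cline_self by blast
  ultimately have "orth (ssum p (cline v)) \<subset> orth p"
    using assms(2) by blast
  moreover have "span (orth X) = orth X" for X :: "(complex^'n) set"
    using span_eq_iff csubspace_imp_subspace[OF csubspace_orth] by blast
  ultimately show "span (orth (ssum p (cline v))) \<subset> span (orth p)"
    by metis
qed

lemma ssum_cline_inter_orth_singleton:
  assumes "u \<noteq> 0"
  shows "ssum (cline u) (cline w) \<inter> orth {u} \<subseteq> cline (w - (cinner u w / cinner u u) *s u)"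
proof
  fix x assume x: "x \<in> ssum (cline u) (cline w) \<inter> orth {u}"
  then obtain c d where xcd: "x = c *s u + d *s w"
    by (auto elim!: ssumE clineE)
  have "cinner u x = 0"
    using x by (simp add: orth_def)
  then have "c = - d * (cinner u w / cinner u u)"
    using assms by (simp add: xcd cinner_add_right cinner_smult_right field_simps add_eq_0_iff2)
  then have "x = d *s (w - (cinner u w / cinner u u) *s u)"
    by (simp add: xcd vector_ssub_ldistrib vector_smult_assoc vector_smult_lneg mult.commute)
  then show "x \<in> cline (w - (cinner u w / cinner u u) *s u)"
    by (simp only: smult_in_cline)
qed

lemma smult_in_real_span: "u \<in> S \<Longrightarrow> \<i> *s u \<in> S \<Longrightarrow> (c::complex) *s u \<in> span S"
  by (simp add: smult_eq_Re_Im[of c] span_add span_mul span_base)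

lemma exists_nonzero_orth_ssum_cline:
  assumes "CARD('n) \<ge> 3"
  obtains n :: "complex^'n" where "n \<noteq> 0" "n \<in> orth (ssum (cline u) (cline w))"
proof -
  let ?r = "ssum (cline u) (cline w)"
  define S where "S = set [u, \<i> *s u, w, \<i> *s w]"
  have "?r \<subseteq> span S"
  proof
    fix x assume "x \<in> ?r"
    then obtain c d where "x = c *s u + d *s w"
      by (auto elim!: ssumE clineE)
    moreover have "c *s u \<in> span S" "d *s w \<in> span S"
      by (rule smult_in_real_span; simp add: S_def)+
    ultimately show "x \<in> span S"
      by (simp add: span_add)
  qed
  have "?r \<noteq> UNIV"
  proof
    assume "?r = UNIV"
    with \<open>?r \<subseteq> span S\<close> have "DIM(complex^'n) \<le> card S"
      using dim_le_card[of UNIV S] by (simp add: S_def dim_UNIV)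
    also have "card S \<le> 4"
      unfolding S_def using card_length[of "[u, \<i> *s u, w, \<i> *s w]"] by simp
    finally show False
      using assms by simp
  qed
  then have "\<not> orth ?r \<subseteq> {0}"
    by (simp add: orth_subset_zero_iff csubspace_ssum csubspace_cline)
  then show ?thesis
    using that by blast
qed

lemma orth_residuals_independent:
  assumes indep: "\<nexists>c. w = c *s u \<or> u = c *s w"
  defines "a \<equiv> w - (cinner u w / cinner u u) *s u" and "b \<equiv> u - (cinner w u / cinner w w) *s w"
  shows "a \<noteq> 0" and "b \<noteq> c *s a"
proof -
  have "\<not> (w = 0 *s u \<or> u = 0 *s w)"
    using indep by blast
  then have "u \<noteq> 0" "w \<noteq> 0"
    by auto
  then have ua: "cinner u a = 0" and wb: "cinner w b = 0"
    by (simp_all add: a_def b_def cinner_diff_right cinner_smult_right)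
  show "a \<noteq> 0"
  proof
    assume "a = 0"
    then have "w = (cinner u w / cinner u u) *s u"
      by (simp add: a_def)
    with indep show False
      by blast
  qed
  show "b \<noteq> c *s a"
  proof
    assume "b = c *s a"
    then have "cinner u b = 0"
      by (simp add: cinner_smult_right ua)
    moreover have "cinner b b = cinner u b - cnj (cinner w u / cinner w w) * cinner w b"
      by (subst (1) b_def) (simp add: cinner_diff_left cinner_smult_left)
    ultimately have "b = 0"
      using wb by simp
    with indep show False
      by (simp add: b_def)
  qed
qed

subsection \<open>Compatibility and the Sasaki projection\<close>

lemma compatible_if_orth_subset:
  assumes "csubspace p" "csubspace q" "orth q \<subseteq> p"
  shows "compatible p q"
  unfolding compatible_def
proof
  show "p \<subseteq> ssum (p \<inter> q) (p \<inter> orth q)"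
  proof
    fix v assume v: "v \<in> p"
    obtain a b where ab: "a \<in> q" "b \<in> orth q" "v = a + b"
      using orth_decomp[OF assms(2)] .
    then have "a \<in> p" "b \<in> p"
      using csubspace_diff[OF assms(1) v, of b] assms(3) by auto
    then show "v \<in> ssum (p \<inter> q) (p \<inter> orth q)"
      using ab by (simp add: ssumI)
  qed
qed (use assms(1) in \<open>intro ssum_least, auto\<close>)

lemma compatible_if_subset_orth:
  assumes "csubspace p" "csubspace q" "p \<subseteq> orth q"
  shows "compatible p q"
  unfolding compatible_def
proof
  have "p = p \<inter> orth q"
    using assms(3) by blast
  then show "p \<subseteq> ssum (p \<inter> q) (p \<inter> orth q)"
    using assms ssum_upper2[of "p \<inter> q" "p \<inter> orth q"] by (simp add: csubspace_0)
qed (use assms(1) in \<open>intro ssum_least, auto\<close>)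

lemma csubspace_sasaki: "csubspace p \<Longrightarrow> csubspace q \<Longrightarrow> csubspace (sasaki p q)"
  by (simp add: sasaki_def csubspace_inter csubspace_ssum csubspace_orth)

lemma sasaki_mono: "p \<subseteq> p' \<Longrightarrow> sasaki p q \<subseteq> sasaki p' q"
  unfolding sasaki_def using ssum_mono by blast

lemma sasaki_subset: "sasaki p q \<subseteq> q"
  by (simp add: sasaki_def)

lemma orth_component_in_sasaki:
  assumes "csubspace q" "v \<in> k" "a \<in> q" "b \<in> orth q" "v = a + b"
  shows "a \<in> sasaki k q"
proof -
  have "- b \<in> orth q"
    using csubspace_diff[OF csubspace_orth csubspace_0[OF csubspace_orth] assms(4)] by simp
  then have "- b + v \<in> ssum (orth q) k"
    using assms(2) by (rule ssumI)
  then show ?thesis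
    using assms by (simp add: sasaki_def)
qed

lemma sasaki_subset_zero_iff:
  assumes "csubspace p"
  shows "sasaki k p \<subseteq> {0} \<longleftrightarrow> k \<subseteq> orth p"
proof
  assume h: "sasaki k p \<subseteq> {0}"
  show "k \<subseteq> orth p"
  proof
    fix v assume "v \<in> k"
    obtain a b where ab: "a \<in> p" "b \<in> orth p" "v = a + b"
      using orth_decomp[OF assms] .
    then have "a = 0"
      using h orth_component_in_sasaki[OF assms \<open>v \<in> k\<close>] by blast
    then show "v \<in> orth p"
      using ab by simp
  qed
next
  assume "k \<subseteq> orth p"
  then have "sasaki k p \<subseteq> p \<inter> orth p"
    using ssum_least[OF csubspace_orth subset_refl] by (auto simp: sasaki_def)
  then show "sasaki k p \<subseteq> {0}"
    using in_orth_self by blast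
qed

lemma sasaki_orth_self: "csubspace s \<Longrightarrow> sasaki (orth s) s \<subseteq> {0}"
  by (simp add: sasaki_subset_zero_iff)

lemma subset_orth_if_sasaki_subset_orth:
  assumes "csubspace q" "p \<subseteq> q" "sasaki k q \<subseteq> orth p"
  shows "k \<subseteq> orth p"
proof
  fix v assume "v \<in> k"
  obtain a b where ab: "a \<in> q" "b \<in> orth q" "v = a + b"
    using orth_decomp[OF assms(1)] .
  then have "a \<in> orth p" "b \<in> orth p"
    using assms orth_component_in_sasaki[OF assms(1) \<open>v \<in> k\<close>] orth_antimono by blast+
  then show "v \<in> orth p"
    using ab(3) csubspace_add[OF csubspace_orth] by blast
qed

lemma sasaki_eq_inter:
  assumes "csubspace p" "orth q \<subseteq> p"
  shows "sasaki p q = q \<inter> p"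
  unfolding sasaki_def
  using ssum_least[OF assms(1,2) subset_refl] ssum_upper2[OF csubspace_0[OF csubspace_orth]] by blast

lemma sasaki_subset_if_subset_orth:
  assumes "csubspace q" "csubspace k'" "k' \<subseteq> q" "k \<subseteq> orth (q \<inter> orth k')"
  shows "sasaki k q \<subseteq> k'"
proof
  fix v assume "v \<in> sasaki k q"
  then obtain t a where v: "v \<in> q" "t \<in> orth q" "a \<in> k" "v = t + a"
    by (auto simp: sasaki_def elim!: ssumE)
  have "v \<in> orth (orth k')"
  proof (rule orthI)
    fix z assume z: "z \<in> orth k'"
    obtain z1 z2 where zz: "z1 \<in> q" "z2 \<in> orth q" "z = z1 + z2"
      using orth_decomp[OF assms(1)] .
    have "z2 \<in> orth k'"
      using zz(2) orth_antimono[OF assms(3)] by blast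
    then have "z1 \<in> q \<inter> orth k'"
      using csubspace_diff[OF csubspace_orth z] zz by force
    then have "cinner z1 a = 0" "cinner z1 t = 0" "cinner z2 v = 0"
      using assms(4) v zz orthD by (blast, blast, metis orthD')
    then show "cinner z v = 0"
      by (simp add: zz(3) v(4) cinner_add_left cinner_add_right)
  qed
  then show "v \<in> k'"
    using orth_orth[OF assms(2)] by simp
qed

subsection \<open>Unitary operators\<close>

lemma Ud_matrix_inv:
  assumes "U \<in> Ud"
  shows "U ** matrix_inv U = mat 1 \<and> matrix_inv U ** U = mat 1"
proof -
  have "\<exists>A. U ** A = mat 1 \<and> A ** U = mat 1"
    using assms by (auto simp: Ud_def)
  then show ?thesis
    unfolding matrix_inv_def by (rule someI_ex)
qed

lemma matrix_vector_mult_smult: "(U::complex^'n^'m) *v (c *s x) = c *s (U *v x)"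
  by (simp add: vec_eq_iff matrix_vector_mult_def sum_distrib_left algebra_simps)

lemma csubspace_app_op:
  assumes "csubspace p"
  shows "csubspace (app_op U p)"
  unfolding csubspace_def
proof (intro conjI ballI allI)
  show "0 \<in> app_op U p"
    using csubspace_0[OF assms] by (force simp: app_op_def)
next
  fix x y assume "x \<in> app_op U p" "y \<in> app_op U p"
  then show "x + y \<in> app_op U p"
    using csubspace_add[OF assms] by (auto simp: app_op_def simp flip: matrix_vector_right_distrib)
next
  fix c x assume "x \<in> app_op U p"
  then show "c *s x \<in> app_op U p"
    using csubspace_smult[OF assms] by (auto simp: app_op_def simp flip: matrix_vector_mult_smult)
qed

lemma app_op_mono: "p \<subseteq> q \<Longrightarrow> app_op U p \<subseteq> app_op U q"
  by (auto simp: app_op_def)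

lemma app_op_subset_iff:
  assumes "U \<in> Ud"
  shows "app_op U k \<subseteq> p \<longleftrightarrow> k \<subseteq> app_op (matrix_inv U) p"
proof -
  have inv: "U *v (matrix_inv U *v v) = v" "matrix_inv U *v (U *v v) = v" for v
    using Ud_matrix_inv[OF assms] by (simp_all add: matrix_vector_mul_assoc)
  show ?thesis
  proof
    assume "app_op U k \<subseteq> p"
    then have "U *v v \<in> p" if "v \<in> k" for v
      using that by (auto simp: app_op_def)
    then show "k \<subseteq> app_op (matrix_inv U) p"
      unfolding app_op_def using inv(2) by (metis image_eqI subsetI)
  next
    assume "k \<subseteq> app_op (matrix_inv U) p"
    then show "app_op U k \<subseteq> p"
      unfolding app_op_def using inv(1) by auto
  qed
qed

subsection \<open>Real three-space\<close>

lemma inner_cross3_cross3: "cross3 a b \<bullet> cross3 c d = (a \<bullet> c) * (b \<bullet> d) - (a \<bullet> d) * (b \<bullet> c)"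
  by (simp add: cross3_simps)

lemma cross3_cross3: "cross3 x (cross3 a b) = (x \<bullet> b) *\<^sub>R a - (x \<bullet> a) *\<^sub>R b"
proof (rule iffD2[OF vec_eq_iff], rule allI)
  fix i :: 3
  show "cross3 x (cross3 a b) $ i = ((x \<bullet> b) *\<^sub>R a - (x \<bullet> a) *\<^sub>R b) $ i"
    using exhaust_3[of i] by (auto simp: cross3_def inner_vec_def sum_3 algebra_simps)
qed

lemma cross3_eq_0_iff: "cross3 a b = 0 \<longleftrightarrow> (a \<bullet> a) * (b \<bullet> b) = (a \<bullet> b)\<^sup>2"
proof -
  have "cross3 a b = 0 \<longleftrightarrow> cross3 a b \<bullet> cross3 a b = 0"
    by simp
  then show ?thesis
    by (simp add: inner_cross3_cross3 inner_commute power2_eq_square)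
qed

lemma parallel_if_orthogonal_to_pair:
  fixes a b c p :: "real^3"
  assumes "a \<bullet> p = 0" "b \<bullet> p = 0" "a \<bullet> c = 0" "b \<bullet> c = 0" "cross3 a b \<noteq> 0" "c \<noteq> 0"
  obtains t where "p = t *\<^sub>R c"
proof -
  define m where "m = cross3 a b"
  have par: "(m \<bullet> m) *\<^sub>R x = (m \<bullet> x) *\<^sub>R m" if "a \<bullet> x = 0" "b \<bullet> x = 0" for x
  proof -
    have "cross3 x m = 0"
      using cross3_cross3[of x a b] that by (simp add: m_def inner_commute)
    then show ?thesis
      using cross3_cross3[of m x m] by simp
  qed
  have mm: "m \<bullet> m \<noteq> 0"
    using assms(5) by (simp add: m_def)
  have mc: "m \<bullet> c \<noteq> 0"
    using par[OF assms(3,4)] mm assms(6) by auto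
  have "(m \<bullet> m) *\<^sub>R ((m \<bullet> c) *\<^sub>R p) = (m \<bullet> c) *\<^sub>R ((m \<bullet> m) *\<^sub>R p)"
    by simp
  also have "\<dots> = (m \<bullet> p) *\<^sub>R ((m \<bullet> m) *\<^sub>R c)"
    unfolding par[OF assms(1,2)] par[OF assms(3,4)] by simp
  also have "\<dots> = (m \<bullet> m) *\<^sub>R ((m \<bullet> p) *\<^sub>R c)"
    by simp
  finally have "(m \<bullet> c) *\<^sub>R p = (m \<bullet> p) *\<^sub>R c"
    using mm scaleR_cancel_left by blast
  then have "p = ((m \<bullet> p) / (m \<bullet> c)) *\<^sub>R c"
    by (simp add: eq_vector_fraction_iff mc)
  then show ?thesis
    using that by blast
qed

lemma inner_cross3_coordinates:
  fixes l k :: "real^3"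
  assumes "l \<bullet> l = 1" "k \<bullet> k = 1"
  defines "n \<equiv> cross3 l k"
  shows "(a *\<^sub>R l + b *\<^sub>R k + c *\<^sub>R n) \<bullet> l = a + b * (l \<bullet> k)"
    and "(a *\<^sub>R l + b *\<^sub>R k + c *\<^sub>R n) \<bullet> k = a * (l \<bullet> k) + b"
    and "(a *\<^sub>R l + b *\<^sub>R k + c *\<^sub>R n) \<bullet> (a' *\<^sub>R l + b' *\<^sub>R k + c' *\<^sub>R n)
       = a * a' + b * b' + (a * b' + a' * b) * (l \<bullet> k) + c * c' * (1 - (l \<bullet> k)\<^sup>2)"
  using assms
  by (simp_all add: n_def inner_add_left inner_add_right inner_commute dot_cross_self
      inner_cross3_cross3 algebra_simps power2_eq_square)

lemma exists_unit_pair_closer: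
  fixes l k :: "real^3"
  assumes "l \<bullet> l = 1" "k \<bullet> k = 1" "l \<bullet> k = g" "0 < g" "g < 1"
  obtains c c' where "c \<bullet> c = 1" "c' \<bullet> c' = 1" "c \<bullet> l = sqrt g" "c \<bullet> k = sqrt g"
    "c' \<bullet> l = sqrt g" "c' \<bullet> k = sqrt g" "c \<bullet> c' = (3 * g - 1) / (1 + g)"
proof -
  define r where "r = sqrt g"
  define s where "s = 1 / (1 + g)"
  have rr: "r * r = g" and s: "s * (1 + g) = 1"
    using assms(4) by (simp_all add: r_def s_def)
  have rs: "r * s + g * (r * s) = r"
    using s by (metis distrib_left mult.commute mult.left_commute mult_1_right)
  have ss: "s * s * ((1 + g) * (1 + g)) = 1"
    using s by (metis mult.assoc mult.left_commute mult_1_right)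
  let ?c = "(s * r) *\<^sub>R l + (s * r) *\<^sub>R k + s *\<^sub>R cross3 l k"
  let ?c' = "(s * r) *\<^sub>R l + (s * r) *\<^sub>R k + (- s) *\<^sub>R cross3 l k"
  note coord = inner_cross3_coordinates[OF assms(1,2), unfolded assms(3)]
  have "?c \<bullet> l = r" "?c \<bullet> k = r" "?c' \<bullet> l = r" "?c' \<bullet> k = r"
    using rs by (simp_all only: coord) (simp_all add: algebra_simps)
  moreover have "?c \<bullet> ?c = s * s * ((1 + g) * (1 + g))" "?c' \<bullet> ?c' = s * s * ((1 + g) * (1 + g))"
    "?c \<bullet> ?c' = s * s * ((1 + g) * (3 * g - 1))"
    by (simp_all only: coord) (simp_all add: algebra_simps power2_eq_square flip: rr)
  moreover have "s * s * ((1 + g) * (3 * g - 1)) = s * (3 * g - 1) * (s * (1 + g))"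
    by (simp add: algebra_simps)
  then have "s * s * ((1 + g) * (3 * g - 1)) = (3 * g - 1) / (1 + g)"
    using s by (simp add: s_def)
  ultimately show ?thesis
    using that[of ?c ?c'] ss unfolding r_def by simp
qed

lemma exists_unit_with_inner:
  fixes l k :: "real^3"
  assumes "l \<bullet> l = 1" "k \<bullet> k = 1" "l \<bullet> k = g" "0 < g" "g < d" "d < 1"
  obtains c where "c \<bullet> c = 1" "c \<bullet> l = d" "c \<bullet> k = g / d"
proof -
  define e where "e = 1 - g * g"
  define X where "X = (d * d - g * g) * (1 - d * d)"
  have "g * g < d * d" "d * d < 1" "g * g < 1"
    using mult_strict_mono[of g d g d] mult_strict_mono[of d 1 d 1] mult_strict_mono[of g 1 g 1]
      assms(4-6) by simp_all
  then have pos: "0 < d" "0 < e" "0 \<le> X"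
    using assms(4-6) by (simp_all add: e_def X_def)
  define \<alpha> where "\<alpha> = (d * d - g * g) / (d * e)"
  define \<beta> where "\<beta> = g * (1 - d * d) / (d * e)"
  define \<gamma> where "\<gamma> = sqrt X / (d * e)"
  let ?c = "\<alpha> *\<^sub>R l + \<beta> *\<^sub>R k + \<gamma> *\<^sub>R cross3 l k"
  note coord = inner_cross3_coordinates[OF assms(1,2), unfolded assms(3)]
  have cl: "\<alpha> + \<beta> * g = d"
    using pos by (simp add: \<alpha>_def \<beta>_def field_simps) (simp add: e_def algebra_simps)
  have ck: "\<alpha> * g + \<beta> = g / d"
    using pos by (simp add: \<alpha>_def \<beta>_def field_simps) (simp add: e_def algebra_simps)
  have "?c \<bullet> ?c = \<alpha> * (\<alpha> + \<beta> * g) + \<beta> * (\<alpha> * g + \<beta>) + \<gamma> * \<gamma> * e"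
    by (simp only: coord) (simp add: e_def algebra_simps power2_eq_square)
  also have "\<dots> = \<alpha> * d + \<beta> * (g / d) + X / (d * d * e)"
    using pos unfolding cl ck by (simp add: \<gamma>_def)
  also have "\<dots> = 1"
    using pos(1,2) by (simp add: \<alpha>_def \<beta>_def X_def field_simps) (simp add: e_def algebra_simps)
  finally show ?thesis
    using that[of ?c] cl ck by (simp only: coord)
qed

subsection \<open>Real frames in complex space\<close>

locale orthonormal_triple =
  fixes e1 e2 e3 :: "complex^'n"
  assumes orthonormal: "cinner e1 e1 = 1" "cinner e2 e2 = 1" "cinner e3 e3 = 1"
    "cinner e1 e2 = 0" "cinner e1 e3 = 0" "cinner e2 e3 = 0"
begin

definition embed :: "real^3 \<Rightarrow> complex^'n" where
  "embed v = of_real (v$1) *s e1 + of_real (v$2) *s e2 + of_real (v$3) *s e3"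

definition ray :: "real^3 \<Rightarrow> (complex^'n) set" where
  "ray v = cline (embed v)"

definition frame_span :: "(complex^'n) set" where
  "frame_span = {embed p + \<i> *s embed q | p q. True}"

lemma embed_add: "embed (v + w) = embed v + embed w"
  by (simp add: embed_def vector_sadd_rdistrib algebra_simps)

lemma embed_scaleR: "embed (t *\<^sub>R v) = of_real t *s embed v"
  by (simp add: embed_def vector_add_ldistrib vector_smult_assoc)

lemma cinner_embed: "cinner (embed v) (embed w) = of_real (v \<bullet> w)"
proof -
  have "cinner e2 e1 = 0" "cinner e3 e1 = 0" "cinner e3 e2 = 0"
    using orthonormal by (simp_all add: cinner_eq_0_commute)
  then show ?thesis
    using orthonormal by (simp add: embed_def cinner_add_left cinner_add_right cinner_smult_left
        cinner_smult_right inner_vec_def sum_3)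
qed

lemma smult_embed: "c *s embed p = embed (Re c *\<^sub>R p) + \<i> *s embed (Im c *\<^sub>R p)"
proof -
  have "c *s embed p = (of_real (Re c) + \<i> * of_real (Im c)) *s embed p"
    by (subst complex_eq[of c]) (rule refl)
  then show ?thesis
    by (simp add: embed_scaleR vector_sadd_rdistrib vector_smult_assoc)
qed

lemma smult_embed_in_frame_span: "c *s embed p \<in> frame_span"
  unfolding frame_span_def using smult_embed by blast

lemma frame_span_add:
  assumes "x \<in> frame_span" "y \<in> frame_span"
  shows "x + y \<in> frame_span"
proof -
  obtain p q p' q' where "x = embed p + \<i> *s embed q" "y = embed p' + \<i> *s embed q'"
    using assms unfolding frame_span_def by blast
  then have "x + y = embed (p + p') + \<i> *s embed (q + q')"
    by (simp add: embed_add vector_add_ldistrib)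
  then show ?thesis
    unfolding frame_span_def by blast
qed

lemma csubspace_frame_span: "csubspace frame_span"
  unfolding csubspace_def
proof (intro conjI ballI allI)
  show "0 \<in> frame_span"
    using smult_embed_in_frame_span[of 0 0] by simp
  show "x + y \<in> frame_span" if "x \<in> frame_span" "y \<in> frame_span" for x y
    using that by (rule frame_span_add)
  show "c *s x \<in> frame_span" if x: "x \<in> frame_span" for c x
  proof -
    obtain p q where "x = embed p + \<i> *s embed q"
      using x unfolding frame_span_def by blast
    then have "c *s x = c *s embed p + (c * \<i>) *s embed q"
      by (simp add: vector_add_ldistrib vector_smult_assoc)
    then show ?thesis
      by (simp add: frame_span_add smult_embed_in_frame_span)
  qed
qed

lemma csubspace_ray: "csubspace (ray v)"
  by (simp add: ray_def csubspace_cline)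

lemma ray_subset_frame_span: "ray v \<subseteq> frame_span"
  unfolding ray_def cline_def using smult_embed_in_frame_span by blast

lemma ray_scaleR: "t \<noteq> 0 \<Longrightarrow> ray (t *\<^sub>R v) = ray v"
  by (simp add: ray_def embed_scaleR cline_smult)

lemma ray_subset_orth_ray: "v \<bullet> w = 0 \<Longrightarrow> ray v \<subseteq> orth (ray w)"
  by (simp add: ray_def cline_subset_orth cinner_embed)

lemma frame_span_inter_orth_subset_ray:
  assumes "a \<bullet> c = 0" "b \<bullet> c = 0" "cross3 a b \<noteq> 0" "c \<noteq> 0"
  shows "orth (ray a) \<inter> orth (ray b) \<inter> frame_span \<subseteq> ray c"
proof
  fix x assume x: "x \<in> orth (ray a) \<inter> orth (ray b) \<inter> frame_span"
  then obtain p q where xpq: "x = embed p + \<i> *s embed q"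
    unfolding frame_span_def by blast
  have "cinner (embed v) x = of_real (v \<bullet> p) + \<i> * of_real (v \<bullet> q)" for v
    by (simp add: xpq cinner_add_right cinner_smult_right cinner_embed)
  moreover have "cinner (embed a) x = 0" "cinner (embed b) x = 0"
    using x orthD[OF _ in_cline_self] unfolding ray_def by blast+
  ultimately have "a \<bullet> p = 0" "a \<bullet> q = 0" "b \<bullet> p = 0" "b \<bullet> q = 0"
    by (simp_all add: complex_eq_iff)
  then obtain s t where "p = s *\<^sub>R c" "q = t *\<^sub>R c"
    using parallel_if_orthogonal_to_pair[OF _ _ assms] by meson
  then have "x = (of_real s + \<i> * of_real t) *s embed c"
    by (simp add: xpq embed_scaleR vector_sadd_rdistrib vector_smult_assoc)
  then show "x \<in> ray c"
    by (simp only: ray_def smult_in_cline)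
qed

end

lemma sgn_eq_smult: "sgn (v::complex^'n) = of_real (inverse (norm v)) *s v"
  by (simp add: sgn_div_norm scaleR_eq_smult divide_inverse_commute)

lemma cinner_sgn_sgn: "v \<noteq> 0 \<Longrightarrow> cinner (sgn v) (sgn v) = 1"
  by (simp add: cinner_self norm_sgn)

lemma exists_unit_real_inner:
  assumes "a \<noteq> 0"
  obtains e and g :: real where "cinner e e = 1" "cline e = cline a" "cinner e b = of_real g"
proof -
  define z where "z = cinner (sgn a) b"
  define e where "e = cis (Arg z) *s sgn a"
  have e: "e = (cis (Arg z) * of_real (inverse (norm a))) *s a"
    by (simp add: e_def sgn_eq_smult vector_smult_assoc)
  have "cnj (cis (Arg z)) * z = cnj (cis (Arg z)) * (of_real (cmod z) * cis (Arg z))"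
    by (simp only: rcis_cmod_Arg[of z, unfolded rcis_def])
  also have "\<dots> = of_real (cmod z)"
    by (simp add: cis_cnj mult.left_commute cis_mult)
  finally have "cinner e b = of_real (cmod z)"
    by (simp add: e_def z_def cinner_smult_left)
  moreover have "cinner e e = 1"
    using assms by (simp add: e_def cinner_smult_left cinner_smult_right cinner_sgn_sgn cis_cnj cis_mult)
  moreover have "cline e = cline a"
    using assms by (simp add: e cline_smult)
  ultimately show ?thesis
    using that by blast
qed

lemma exists_adapted_orthonormal_triple:
  assumes a: "a \<noteq> 0" and b: "\<And>c. b \<noteq> c *s a"
    and n: "n \<noteq> 0" "cinner a n = 0" "cinner b n = 0"
  obtains e1 e2 e3 :: "complex^'n" and g h :: real
  where "orthonormal_triple e1 e2 e3" "cline e1 = cline a" "b = of_real g *s e1 + of_real h *s e2" "h \<noteq> 0"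
proof -
  obtain e1 g where e1: "cinner e1 e1 = 1" "cline e1 = cline a" "cinner e1 b = of_real g"
    using exists_unit_real_inner[OF a] .
  have "e1 \<in> cline a"
    using e1(2) in_cline_self[of e1] by simp
  then obtain c where c: "e1 = c *s a"
    by (rule clineE)
  define b' where "b' = b - of_real g *s e1"
  have e1n: "cinner e1 n = 0"
    by (simp add: c cinner_smult_left n(2))
  have e1b': "cinner e1 b' = 0" and b'n: "cinner b' n = 0"
    by (simp_all add: b'_def cinner_smult_left cinner_smult_right cinner_diff_left cinner_diff_right
        n(3) e1 e1n)
  have b': "b' \<noteq> 0"
  proof
    assume "b' = 0"
    then have "b = (of_real g * c) *s a"
      by (simp add: b'_def c vector_smult_assoc)
    with b show False
      by blast
  qed
  have "orthonormal_triple e1 (sgn b') (sgn n)"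
  proof
    show "cinner e1 e1 = 1" "cinner (sgn b') (sgn b') = 1" "cinner (sgn n) (sgn n) = 1"
      using e1(1) b' n(1) by (simp_all add: cinner_sgn_sgn)
    show "cinner e1 (sgn b') = 0" "cinner e1 (sgn n) = 0" "cinner (sgn b') (sgn n) = 0"
      by (simp_all add: sgn_eq_smult cinner_smult_left cinner_smult_right e1b' e1n b'n)
  qed
  moreover have "b = of_real g *s e1 + of_real (norm b') *s sgn b'"
    using b' by (simp add: sgn_eq_smult vector_smult_assoc b'_def)
  ultimately show ?thesis
    using that e1(2) b' by simp
qed

subsection \<open>Models of the axioms\<close>

locale pqm_model =
  fixes M :: "('m, 'n::finite) lstruct"
  assumes rel_nonbot: "\<exists>x. \<not> rel M {0} x"
    and rel_UNIV: "rel M UNIV x"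
    and rel_mono:
      "csubspace p \<Longrightarrow> csubspace q \<Longrightarrow> p \<subseteq> q \<Longrightarrow> rel M p x \<Longrightarrow> rel M q x"
    and rel_inter_compatible:
      "csubspace p \<Longrightarrow> csubspace q \<Longrightarrow> compatible p q \<Longrightarrow> rel M p x \<Longrightarrow> rel M q x \<Longrightarrow>
        rel M (p \<inter> q) x"
    and rel_pi:
      "csubspace p \<Longrightarrow> csubspace q \<Longrightarrow> rel M p x \<Longrightarrow> rel M (sasaki p q) (pi_fun M q x)"
    and rel_pi_pi_zero:
      "csubspace p \<Longrightarrow> csubspace q \<Longrightarrow> p \<subseteq> q \<Longrightarrow>
        rel M {0} (pi_fun M p (pi_fun M q x)) \<Longrightarrow> rel M {0} (pi_fun M p x)"
    and rel_orth_if_pi_zero: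
      "csubspace q \<Longrightarrow> rel M {0} (pi_fun M q x) \<Longrightarrow> rel M (orth q) x"
    and rel_u:
      "csubspace p \<Longrightarrow> U \<in> Ud \<Longrightarrow> rel M p x \<Longrightarrow> rel M (app_op U p) (u_fun M U x)"
    and rel_u_inv:
      "csubspace p \<Longrightarrow> U \<in> Ud \<Longrightarrow> rel M p (u_fun M U x) \<Longrightarrow>
        rel M (app_op (matrix_inv U) p) x"

lemma PQM_model_iff_pqm_model: "PQM_model M \<longleftrightarrow> pqm_model M"
  unfolding PQM_model_def pqm_model_def Hd_def bot_sp_def top_sp_def Ball_def mem_Collect_eq
    conj_assoc
  by (intro conj_cong refl; blast)

context pqm_model
begin

lemma rel_zero_if_orthogonal:
  assumes "csubspace p" "csubspace q" "p \<subseteq> orth q" "rel M p x" "rel M q x"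
  shows "rel M {0} x"
proof -
  have "rel M (p \<inter> q) x"
    using rel_inter_compatible[OF assms(1,2) compatible_if_subset_orth[OF assms(1-3)] assms(4,5)] .
  moreover have "p \<inter> q \<subseteq> {0}"
    using assms(3) in_orth_self by blast
  ultimately show ?thesis
    using rel_mono[OF csubspace_inter[OF assms(1,2)] csubspace_zero] by blast
qed

lemma rel_orth_singleton:
  assumes "csubspace p" "rel M p x" "v \<in> orth p"
  shows "rel M (orth {v}) x"
  by (rule rel_mono[OF assms(1) csubspace_orth _ assms(2)]) (use orthD'[OF assms(3)] in \<open>auto intro!: orthI\<close>)

lemma rel_orth_singleton_smult:
  assumes "rel M (orth {v}) x"
  shows "rel M (orth {c *s v}) x"
  by (rule rel_mono[OF csubspace_orth csubspace_orth _ assms]) (auto simp: orth_def cinner_smult_left)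

lemma rel_of_rel_orth_singletons:
  assumes "csubspace p" "\<And>v. v \<in> orth p \<Longrightarrow> rel M (orth {v}) x"
  shows "rel M p x"
  using assms
proof (induction "dim (orth p)" arbitrary: p rule: less_induct)
  case less
  show ?case
  proof (cases "orth p \<subseteq> {0}")
    case True
    then show ?thesis
      using less.prems(1) rel_UNIV by (simp add: orth_subset_zero_iff)
  next
    case False
    then obtain v where v: "v \<in> orth p" "v \<noteq> 0"
      by auto
    let ?p' = "ssum p (cline v)"
    have p': "csubspace ?p'"
      by (simp add: csubspace_ssum csubspace_cline less.prems(1))
    have "orth ?p' \<subseteq> orth p"
      by (simp add: orth_antimono ssum_upper1 csubspace_0 csubspace_cline)
    then have "rel M ?p' x"
      using less.prems(2) by (intro less.hyps[OF dim_orth_ssum_cline_less[OF less.prems(1) v] p']) blast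
    moreover have "compatible ?p' (orth {v})"
      by (intro compatible_if_orth_subset p' csubspace_orth)
        (simp add: orth_orth_singleton ssum_upper2 csubspace_0 less.prems(1))
    ultimately have "rel M (?p' \<inter> orth {v}) x"
      using rel_inter_compatible[OF p' csubspace_orth] less.prems(2)[OF v(1)] by blast
    then show ?thesis
      by (simp add: ssum_cline_orth_singleton less.prems(1) v)
  qed
qed

lemma rel_orth_if_rel_orth_pi:
  assumes "csubspace s" "csubspace r" "s \<subseteq> r" "rel M (orth s) (pi_fun M r x)"
  shows "rel M (orth s) x"
proof -
  have "rel M (sasaki (orth s) s) (pi_fun M s (pi_fun M r x))"
    using rel_pi[OF csubspace_orth assms(1) assms(4)] .
  then have "rel M {0} (pi_fun M s (pi_fun M r x))"
    by (rule rel_mono[OF csubspace_sasaki[OF csubspace_orth assms(1)] csubspace_zero sasaki_orth_self[OF assms(1)]])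
  then show ?thesis
    using rel_orth_if_pi_zero[OF assms(1) rel_pi_pi_zero[OF assms(1-3)]] by blast
qed

end

locale pqm_frame = pqm_model M + orthonormal_triple e1 e2 e3
  for M :: "('m, 'n::finite) lstruct" and e1 e2 e3 :: "complex^'n"
begin

(* Since c x l and c x k are orthogonal, the two hyperplanes orthogonal to them are compatible;
   the frame span is compatible with their meet, and cuts it down to the ray of c. *)
lemma rel_ray_of_rel_rays:
  assumes l: "rel M (ray l) y" and k: "rel M (ray k) y"
    and c: "(c \<bullet> l) * (c \<bullet> k) = (l \<bullet> k) * (c \<bullet> c)" "cross3 c l \<noteq> 0" "cross3 c k \<noteq> 0"
  shows "rel M (ray c) y"
proof -
  define a where "a = cross3 c l"
  define b where "b = cross3 c k"
  let ?A = "orth (ray a)" and ?B = "orth (ray b)"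
  have ab: "a \<bullet> b = 0"
    using c(1) by (simp add: a_def b_def inner_cross3_cross3 inner_commute algebra_simps)
  have "cross3 a b \<noteq> 0"
    using c(2,3) ab by (simp add: cross3_eq_0_iff a_def b_def)
  moreover have "a \<bullet> c = 0" "b \<bullet> c = 0"
    by (simp_all add: a_def b_def inner_commute dot_cross_self)
  ultimately have ABW: "?A \<inter> ?B \<inter> frame_span \<subseteq> ray c"
    using c(2) by (intro frame_span_inter_orth_subset_ray) auto
  have A: "rel M ?A y"
    by (rule rel_mono[OF csubspace_ray csubspace_orth ray_subset_orth_ray l]) (simp add: a_def dot_cross_self)
  have B: "rel M ?B y"
    by (rule rel_mono[OF csubspace_ray csubspace_orth ray_subset_orth_ray k]) (simp add: b_def dot_cross_self)
  have "compatible ?A ?B"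
    using ab by (intro compatible_if_orth_subset csubspace_orth)
      (simp add: orth_orth csubspace_ray ray_subset_orth_ray inner_commute)
  then have AB: "rel M (?A \<inter> ?B) y"
    using rel_inter_compatible[OF csubspace_orth csubspace_orth _ A B] by blast
  have W: "rel M frame_span y"
    using rel_mono[OF csubspace_ray csubspace_frame_span ray_subset_frame_span l] .
  have cAB: "csubspace (?A \<inter> ?B)"
    by (simp add: csubspace_inter csubspace_orth)
  have "orth frame_span \<subseteq> ?A \<inter> ?B"
    using orth_antimono[OF ray_subset_frame_span] by blast
  then have "compatible (?A \<inter> ?B) frame_span"
    by (rule compatible_if_orth_subset[OF cAB csubspace_frame_span])
  then have "rel M (?A \<inter> ?B \<inter> frame_span) y"
    by (rule rel_inter_compatible[OF cAB csubspace_frame_span _ AB W])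
  then show ?thesis
    by (rule rel_mono[OF csubspace_inter[OF cAB csubspace_frame_span] csubspace_ray ABW])
qed

definition ray_pair :: "'m \<Rightarrow> real \<Rightarrow> bool" where
  "ray_pair y g \<longleftrightarrow> (\<exists>l k. rel M (ray l) y \<and> rel M (ray k) y \<and> l \<bullet> l = 1 \<and> k \<bullet> k = 1 \<and> l \<bullet> k = g)"

lemma ray_pair_uminus:
  assumes "ray_pair y g"
  shows "ray_pair y (- g)"
proof -
  obtain l k where lk: "rel M (ray l) y" "rel M (ray k) y" "l \<bullet> l = 1" "k \<bullet> k = 1" "l \<bullet> k = g"
    using assms by (auto simp: ray_pair_def)
  moreover have "ray (- k) = ray k"
    using ray_scaleR[of "-1" k] by simp
  ultimately show ?thesis
    unfolding ray_pair_def by (intro exI[of _ l] exI[of _ "- k"]) simp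
qed

lemma rel_zero_if_ray_pair_zero: "ray_pair y 0 \<Longrightarrow> rel M {0} y"
  unfolding ray_pair_def
  using rel_zero_if_orthogonal[OF csubspace_ray csubspace_ray ray_subset_orth_ray] by blast

lemma ray_pair_closer:
  assumes "ray_pair y g" "0 < g" "g < 1"
  shows "ray_pair y ((3 * g - 1) / (1 + g))"
proof -
  obtain l k where lk: "rel M (ray l) y" "rel M (ray k) y" "l \<bullet> l = 1" "k \<bullet> k = 1" "l \<bullet> k = g"
    using assms(1) by (auto simp: ray_pair_def)
  obtain c c' where c: "c \<bullet> c = 1" "c' \<bullet> c' = 1" "c \<bullet> l = sqrt g" "c \<bullet> k = sqrt g"
    "c' \<bullet> l = sqrt g" "c' \<bullet> k = sqrt g" "c \<bullet> c' = (3 * g - 1) / (1 + g)"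
    using exists_unit_pair_closer[OF lk(3-5) assms(2,3)] .
  have "rel M (ray c) y" "rel M (ray c') y"
    using c lk assms(2,3) by (auto intro!: rel_ray_of_rel_rays[OF lk(1,2)] simp: cross3_eq_0_iff)
  then show ?thesis
    unfolding ray_pair_def using c by blast
qed

lemma ray_pair_increase:
  assumes "ray_pair y g" "0 < g" "g \<le> d" "d < 1"
  shows "ray_pair y d"
proof (cases "g = d")
  case False
  obtain l k where lk: "rel M (ray l) y" "rel M (ray k) y" "l \<bullet> l = 1" "k \<bullet> k = 1" "l \<bullet> k = g"
    using assms(1) by (auto simp: ray_pair_def)
  obtain c where c: "c \<bullet> c = 1" "c \<bullet> l = d" "c \<bullet> k = g / d"
    using exists_unit_with_inner[OF lk(3-5) assms(2)] False assms(3,4) by force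
  have "0 < g / d" "g / d < 1"
    using assms(2-4) False by simp_all
  then have "d * d \<noteq> 1" "g / d * (g / d) \<noteq> 1"
    using mult_strict_mono[of d 1 d 1] mult_strict_mono[of "g / d" 1 "g / d" 1] assms(2-4) by auto
  then have "rel M (ray c) y"
    using c lk assms(2,3) by (intro rel_ray_of_rel_rays[OF lk(1,2)]) (auto simp: cross3_eq_0_iff power2_eq_square)
  then show ?thesis
    unfolding ray_pair_def using c lk by (intro exI[of _ l] exI[of _ c]) (simp add: inner_commute)
qed (use assms in simp)

lemma rel_zero_if_ray_pair_le:
  assumes "ray_pair y g" "0 \<le> g" "g \<le> real j / (real j + 2)"
  shows "rel M {0} y"
  using assms
proof (induction j arbitrary: g)
  case 0
  then show ?case
    using rel_zero_if_ray_pair_zero by simp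
next
  case (Suc j)
  show ?case
  proof (cases "g = 0")
    case True
    then show ?thesis
      using Suc.prems(1) rel_zero_if_ray_pair_zero by simp
  next
    case False
    define d where "d = (real j + 1) / (real j + 3)"
    have d: "0 < d" "d < 1" "g \<le> d"
      using Suc.prems(3) by (simp_all add: d_def add_ac)
    then have "ray_pair y ((3 * d - 1) / (1 + d))"
      using ray_pair_increase[OF Suc.prems(1)] ray_pair_closer Suc.prems(2) False by simp
    moreover have "(3 * d - 1) / (1 + d) = real j / (real j + 2)"
      by (simp add: d_def divide_simps)
    ultimately show ?thesis
      using Suc.IH by simp
  qed
qed

lemma rel_zero_if_ray_pair:
  assumes "ray_pair y g" "\<bar>g\<bar> < 1"
  shows "rel M {0} y"
proof -
  obtain h where h: "ray_pair y h" "0 \<le> h" "h < 1"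
    using assms ray_pair_uminus[OF assms(1)] by (cases "0 \<le> g") auto
  define j where "j = nat \<lceil>2 * h / (1 - h)\<rceil>"
  have "2 * h / (1 - h) \<le> real j"
    unfolding j_def by linarith
  then have "2 * h \<le> real j * (1 - h)"
    using h(3) by (simp add: field_simps)
  then have "h \<le> real j / (real j + 2)"
    by (simp add: field_simps)
  then show ?thesis
    using rel_zero_if_ray_pair_le h(1,2) by blast
qed

end

context pqm_model
begin

lemma rel_zero_if_two_lines:
  assumes "rel M (cline a) y" "rel M (cline b) y" "a \<noteq> 0" "\<And>c. b \<noteq> c *s a"
    and "n \<noteq> 0" "cinner a n = 0" "cinner b n = 0"
  shows "rel M {0} y"
proof -
  obtain e1 e2 e3 g h where frame: "orthonormal_triple e1 e2 e3" "cline e1 = cline a"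
    "b = of_real g *s e1 + of_real h *s e2" "h \<noteq> 0"
    using exists_adapted_orthonormal_triple[OF assms(3-7)] .
  interpret pqm_frame M e1 e2 e3
    by (rule pqm_frame.intro[OF pqm_model_axioms frame(1)])
  define N where "N = sqrt (g\<^sup>2 + h\<^sup>2)"
  have "g\<^sup>2 < g\<^sup>2 + h\<^sup>2"
    using frame(4) by simp
  then have "sqrt (g\<^sup>2) < N"
    unfolding N_def by (rule real_sqrt_less_mono)
  then have N: "\<bar>g\<bar> < N" "0 < N"
    using abs_ge_zero[of g] by simp_all
  have NN: "N * N = g\<^sup>2 + h\<^sup>2"
    by (simp add: N_def)
  define l :: "real^3" where "l = vector [1, 0, 0]"
  define k :: "real^3" where "k = (1 / N) *\<^sub>R vector [g, h, 0]"
  have "ray l = cline a"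
    using frame(2) by (simp add: l_def ray_def embed_def)
  moreover have "ray k = cline b"
    using N(2) frame(3) by (simp add: k_def ray_scaleR) (simp add: ray_def embed_def)
  moreover have "l \<bullet> l = 1" "l \<bullet> k = g / N"
    by (simp_all add: l_def k_def inner_vec_def sum_3)
  moreover have "k \<bullet> k = 1"
    using frame(4) N(2) NN by (simp add: k_def inner_vec_def sum_3 power2_eq_square flip: add_divide_distrib)
  ultimately have "ray_pair y (g / N)"
    unfolding ray_pair_def using assms(1,2) by (intro exI[of _ l] exI[of _ k]) simp
  moreover have "\<bar>g / N\<bar> < 1"
    using N by (simp add: abs_div_pos[symmetric])
  ultimately show ?thesis
    by (rule rel_zero_if_ray_pair)
qed

lemma rel_pi_cline_residual:
  assumes "rel M (orth {u}) x" "u \<noteq> 0"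
  shows "rel M (cline (w - (cinner u w / cinner u u) *s u)) (pi_fun M (ssum (cline u) (cline w)) x)"
proof -
  let ?r = "ssum (cline u) (cline w)"
  have r: "csubspace ?r"
    by (simp add: csubspace_ssum csubspace_cline)
  have "u \<in> ?r"
    using ssum_upper1[OF csubspace_0[OF csubspace_cline]] in_cline_self by blast
  then have "orth ?r \<subseteq> orth {u}"
    by (simp add: orth_antimono)
  then have "sasaki (orth {u}) ?r = ?r \<inter> orth {u}"
    by (rule sasaki_eq_inter[OF csubspace_orth])
  then show ?thesis
    using rel_mono[OF csubspace_sasaki[OF csubspace_orth r] csubspace_cline _ rel_pi[OF csubspace_orth r assms(1)]]
      ssum_cline_inter_orth_singleton[OF assms(2)] by simp
qed

context
  assumes card: "CARD('n) \<ge> 3"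
begin

lemma rel_orth_singleton_add:
  assumes u: "rel M (orth {u}) x" and w: "rel M (orth {w}) x"
  shows "rel M (orth {u + w}) x"
proof (cases "\<exists>c. w = c *s u \<or> u = c *s w")
  case True
  then obtain c where "u + w = (1 + c) *s u \<or> u + w = (c + 1) *s w"
    by (auto simp: vector_sadd_rdistrib)
  then show ?thesis
    using rel_orth_singleton_smult[OF u, of "1 + c"] rel_orth_singleton_smult[OF w, of "c + 1"]
    by auto
next
  case False
  then have "u \<noteq> 0" "w \<noteq> 0"
    using vector_smult_lzero by auto
  define r where "r = ssum (cline u) (cline w)"
  define a where "a = w - (cinner u w / cinner u u) *s u"
  define b where "b = u - (cinner w u / cinner w w) *s w"
  have comb: "c *s u + d *s w \<in> r" for c d
    unfolding r_def by (intro ssumI smult_in_cline)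
  have ar: "a \<in> r" and br: "b \<in> r" and "u + w \<in> r"
    using comb[of "- (cinner u w / cinner u u)" 1] comb[of 1 "- (cinner w u / cinner w w)"] comb[of 1 1]
    by (simp_all add: a_def b_def vector_smult_lneg)
  have ra: "rel M (cline a) (pi_fun M r x)"
    using rel_pi_cline_residual[OF u \<open>u \<noteq> 0\<close>, of w] by (simp add: a_def r_def)
  have rb: "rel M (cline b) (pi_fun M r x)"
    using rel_pi_cline_residual[OF w \<open>w \<noteq> 0\<close>, of u] by (simp add: b_def r_def ssum_commute)
  obtain n where n: "n \<noteq> 0" "n \<in> orth r"
    using exists_nonzero_orth_ssum_cline[OF card] unfolding r_def by blast
  have "rel M {0} (pi_fun M r x)"
    using orth_residuals_independent[OF False] orthD[OF n(2) ar] orthD[OF n(2) br]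
    by (intro rel_zero_if_two_lines[OF ra rb _ _ n(1)]) (simp_all add: a_def b_def)
  then have "rel M (orth r) x"
    by (rule rel_orth_if_pi_zero[rotated]) (simp add: r_def csubspace_ssum csubspace_cline)
  moreover have "orth r \<subseteq> orth {u + w}"
    using \<open>u + w \<in> r\<close> by (simp add: orth_antimono)
  ultimately show ?thesis
    using rel_mono[OF csubspace_orth csubspace_orth] by blast
qed

lemma rel_inter:
  assumes "csubspace p" "csubspace q" "rel M p x" "rel M q x"
  shows "rel M (p \<inter> q) x"
proof (rule rel_of_rel_orth_singletons[OF csubspace_inter[OF assms(1,2)]])
  fix v assume "v \<in> orth (p \<inter> q)"
  then obtain a b where "a \<in> orth p" "b \<in> orth q" "v = a + b"
    using orth_inter[OF assms(1,2)] by (auto elim: ssumE)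
  then show "rel M (orth {v}) x"
    using rel_orth_singleton_add rel_orth_singleton assms by blast
qed

definition support :: "'m \<Rightarrow> (complex^'n) set" where
  "support m = \<Inter>{p. csubspace p \<and> rel M p m}"

lemma csubspace_support: "csubspace (support m)"
  unfolding support_def by (rule csubspace_Inter) blast

lemma rel_support: "rel M (support m) m"
proof -
  obtain k where k: "csubspace k" "rel M k m" "\<And>p. csubspace p \<and> rel M p m \<Longrightarrow> dim k \<le> dim p"
    using ex_has_least_nat[of "\<lambda>p. csubspace p \<and> rel M p m" UNIV dim] csubspace_UNIV rel_UNIV by blast
  have "k \<subseteq> p" if "csubspace p" "rel M p m" for p
  proof -
    have "dim k \<le> dim (k \<inter> p)"
      using k that by (simp add: csubspace_inter rel_inter)
    then have "k \<inter> p = k"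
      using subspace_dim_equal csubspace_imp_subspace csubspace_inter k(1) that(1) by (metis Int_lower1)
    then show ?thesis
      by blast
  qed
  then have "support m = k"
    using k(1,2) by (auto simp: support_def)
  then show ?thesis
    using k(2) by simp
qed

lemma rel_iff_support_subset: "csubspace p \<Longrightarrow> rel M p m \<longleftrightarrow> support m \<subseteq> p"
  using rel_mono[OF csubspace_support _ _ rel_support] by (auto simp: support_def)

lemma support_pi:
  assumes q: "csubspace q"
  shows "support (pi_fun M q m) = sasaki (support m) q"
proof
  show "support (pi_fun M q m) \<subseteq> sasaki (support m) q"
    using rel_pi[OF csubspace_support q rel_support]
    by (simp add: rel_iff_support_subset csubspace_sasaki csubspace_support q)
  let ?k' = "support (pi_fun M q m)"
  have "?k' \<subseteq> q"
    using \<open>?k' \<subseteq> sasaki (support m) q\<close> sasaki_subset by blast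
  have s: "csubspace (q \<inter> orth ?k')"
    by (simp add: csubspace_inter q csubspace_orth)
  have "?k' \<subseteq> orth (q \<inter> orth ?k')"
    by (subst subset_orth_commute) blast
  then have "rel M (orth (q \<inter> orth ?k')) (pi_fun M q m)"
    by (simp add: rel_iff_support_subset csubspace_orth)
  then have "rel M (orth (q \<inter> orth ?k')) m"
    by (rule rel_orth_if_rel_orth_pi[OF s q Int_lower1])
  then show "sasaki (support m) q \<subseteq> ?k'"
    by (intro sasaki_subset_if_subset_orth q csubspace_support \<open>?k' \<subseteq> q\<close>)
      (simp add: rel_iff_support_subset csubspace_orth)
qed

lemma support_u:
  assumes U: "U \<in> Ud"
  shows "support (u_fun M U m) = app_op U (support m)"
proof
  show "support (u_fun M U m) \<subseteq> app_op U (support m)"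
    using rel_u[OF csubspace_support U rel_support]
    by (simp add: rel_iff_support_subset csubspace_app_op csubspace_support)
  show "app_op U (support m) \<subseteq> support (u_fun M U m)"
    using rel_u_inv[OF csubspace_support U rel_support]
    by (simp add: rel_iff_support_subset csubspace_app_op csubspace_support app_op_subset_iff U)
qed

lemma strong_morphism_support: "strong_morphism M support"
  by (simp add: strong_morphism_def Hd_def csubspace_support rel_iff_support_subset support_pi support_u)

lemma range_support_ne_bot: "range support \<noteq> {bot_sp}"
proof
  assume "range support = {bot_sp}"
  moreover obtain m where "\<not> rel M {0} m"
    using rel_nonbot by blast
  ultimately show False
    using rel_support[of m] by (metis bot_sp_def rangeI singletonD)
qed

end

end

lemma pqm_model_if_strong_morphism:
  assumes \<kappa>: "strong_morphism M \<kappa>" and nontrivial: "range \<kappa> \<noteq> {bot_sp}"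
  shows "pqm_model M"
proof -
  have sub: "csubspace (\<kappa> m)" for m
    using \<kappa> by (simp add: strong_morphism_def Hd_def)
  have rel: "rel M p m \<longleftrightarrow> \<kappa> m \<subseteq> p" if "csubspace p" for p m
    using \<kappa> that by (simp add: strong_morphism_def Hd_def)
  have pi: "\<kappa> (pi_fun M q m) = sasaki (\<kappa> m) q" if "csubspace q" for q m
    using \<kappa> that by (simp add: strong_morphism_def Hd_def)
  have u: "\<kappa> (u_fun M U m) = app_op U (\<kappa> m)" if "U \<in> Ud" for U m
    using \<kappa> that by (simp add: strong_morphism_def)
  show ?thesis
  proof
    obtain m where "\<kappa> m \<noteq> {0}"
      using nontrivial by (auto simp: bot_sp_def)
    then show "\<exists>m. \<not> rel M {0} m"
      using rel[OF csubspace_zero] csubspace_0[OF sub] by blast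
    show "rel M UNIV m" for m
      by (simp add: rel csubspace_UNIV)
    show "rel M q m" if "csubspace p" "csubspace q" "p \<subseteq> q" "rel M p m" for p q m
      using that rel by blast
    show "rel M (p \<inter> q) m" if "csubspace p" "csubspace q" "rel M p m" "rel M q m" for p q m
      using that rel[OF csubspace_inter[OF that(1,2)]] rel[OF that(1)] rel[OF that(2)] by simp
    show "rel M (sasaki p q) (pi_fun M q m)" if "csubspace p" "csubspace q" "rel M p m" for p q m
      using that sasaki_mono[of "\<kappa> m" p q] by (simp add: rel csubspace_sasaki pi)
    show "rel M {0} (pi_fun M p m)"
      if "csubspace p" "csubspace q" "p \<subseteq> q" "rel M {0} (pi_fun M p (pi_fun M q m))" for p q m
      using that subset_orth_if_sasaki_subset_orth[of q p "\<kappa> m"]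
      by (simp add: rel csubspace_zero pi sub csubspace_sasaki sasaki_subset_zero_iff)
    show "rel M (orth q) m" if "csubspace q" "rel M {0} (pi_fun M q m)" for q m
      using that by (simp add: rel csubspace_zero csubspace_orth pi sasaki_subset_zero_iff)
    show "rel M (app_op U p) (u_fun M U m)" if "csubspace p" "U \<in> Ud" "rel M p m" for p U m
      using that app_op_mono[of "\<kappa> m" p U] by (simp add: rel u csubspace_app_op)
    show "rel M (app_op (matrix_inv U) p) m" if "csubspace p" "U \<in> Ud" "rel M p (u_fun M U m)" for p U m
      using that by (simp add: rel u csubspace_app_op app_op_subset_iff)
  qed
qed

theorem mainTheorem15:
  fixes M :: "('m, 'n::finite) lstruct"
  assumes "CARD('n) \<ge> 3"
  shows "PQM_model M \<longleftrightarrow>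
    (\<exists>\<kappa> :: 'm \<Rightarrow> (complex^'n) set. strong_morphism M \<kappa> \<and> range \<kappa> \<noteq> {bot_sp})"
proof
  assume "PQM_model M"
  then interpret pqm_model M
    by (simp add: PQM_model_iff_pqm_model)
  show "\<exists>\<kappa> :: 'm \<Rightarrow> (complex^'n) set. strong_morphism M \<kappa> \<and> range \<kappa> \<noteq> {bot_sp}"
    using strong_morphism_support[OF assms] range_support_ne_bot[OF assms] by blast
next
  assume "\<exists>\<kappa> :: 'm \<Rightarrow> (complex^'n) set. strong_morphism M \<kappa> \<and> range \<kappa> \<noteq> {bot_sp}"
  then show "PQM_model M"
    using pqm_model_if_strong_morphism PQM_model_iff_pqm_model by blast
qed

end
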